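(* Let $\omega\in\mathbb{R}^d$ with $\nu(\omega;\tau)<\infty$, let $A>0$ and $N\ge1$. If $2\tau>d$, then $\lambda=1$ is a point of (two-dimensional Lebesgue) density of $\Lambda(A;\omega,\tau,N)\subseteq\mathbb{C}$, i.e. $\lim_{r\to0}\frac{\mathrm{area}(\Lambda\cap B(1,r))}{\mathrm{area}(B(1,r))}=1$. If $\tau>d$, then $1$ is a point of (one-dimensional Lebesgue) density of $\Lambda(A;\omega,\tau,N)\cap\mathbb{S}^1$ in the unit circle $\mathbb{S}^1$.
   Context: $|k|=\sum_i|k_i|$; $\nu(\omega;\tau)=\sup_{k\in\mathbb{Z}^d\setminus\{0\}}|e^{2\pi ik\cdot\omega}-1|^{-1}|k|^{-\tau}$; $\nu(\lambda;\omega,\tau)=\sup_{k\in\mathbb{Z}^d\setminus\{0\}}|e^{2\pi ik\cdot\omega}-\lambda|^{-1}|k|^{-\tau}$ (value $\infty$ allowed). $\Lambda(A;\omega,\tau,N)=\{\lambda\in\mathbb{C}:\nu(\lambda;\omega,\tau)|\lambda-1|^{N+1}\le A\}$. $B(1,r)$ is the disk of radius $r$ centered at $1$. *)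

theory Defs
  imports "HOL-Analysis.Analysis"
begin

definition l1norm :: "int ^ 'd \<Rightarrow> real" where
  "l1norm k = (\<Sum>i\<in>UNIV. \<bar>real_of_int (k $ i)\<bar>)"

definition kdot :: "int ^ 'd \<Rightarrow> real ^ 'd \<Rightarrow> real" where
  "kdot k \<omega> = (\<Sum>i\<in>UNIV. real_of_int (k $ i) * \<omega> $ i)"

definition nu_lam :: "complex \<Rightarrow> real ^ 'd \<Rightarrow> real \<Rightarrow> ereal" where
  "nu_lam l \<omega> \<tau> =
     (SUP k\<in>{k :: int ^ 'd. k \<noteq> 0}.
        (let z = exp (2 * pi * \<i> * complex_of_real (kdot k \<omega>))
         in if z = l then \<infinity>
            else ereal (1 / (cmod (z - l) * l1norm k powr \<tau>))))"

definition nu :: "real ^ 'd \<Rightarrow> real \<Rightarrow> ereal" where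
  "nu \<omega> \<tau> = nu_lam 1 \<omega> \<tau>"

definition Lam :: "real \<Rightarrow> real ^ 'd \<Rightarrow> real \<Rightarrow> nat \<Rightarrow> complex set" where
  "Lam A \<omega> \<tau> N = {l. nu_lam l \<omega> \<tau> * ereal (cmod (l - 1) ^ (N + 1)) \<le> ereal A}"

end

theory Submission
  imports Defs
begin

text \<open>If \<open>\<lambda> \<notin> \<Lambda>\<close> and \<open>|\<lambda> - 1| \<le> r\<close>, one of the inequalities defining \<open>\<Lambda>\<close> fails, so \<open>\<lambda>\<close> lies within
  \<open>r^(N+1) / (A |k|^\<tau>)\<close> of the point \<open>e^(2\<pi>i k\<cdot>\<omega>)\<close> for some \<open>k \<noteq> 0\<close>. Hence the part of the disc
  \<open>B(1,r)\<close> missing from \<open>\<Lambda>\<close> is covered by discs of total area \<open>\<pi> r^(2N+2) A^-2 \<Sum>\<^sub>k |k|^(-2\<tau>)\<close>, and the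
  part of the arc \<open>{e^(i\<theta>). |\<theta>| \<le> r}\<close> missing from \<open>\<Lambda>\<close> by arcs of total length
  \<open>8 r^(N+1) A^-1 \<Sum>\<^sub>k |k|^(-\<tau>)\<close>. The lattice sums converge for \<open>2\<tau> > d\<close> resp. \<open>\<tau> > d\<close>, so the
  relative defects are \<open>O(r^(2N))\<close> and \<open>O(r^N)\<close>.\<close>

lemma tendsto_measure_ratio_1:
  fixes D :: "real \<Rightarrow> 'a set"
  assumes "L \<in> sets M" "\<And>r. D r \<in> fmeasurable M" "n > 0"
    and "\<forall>\<^sub>F r in at_right 0. 0 < measure M (D r) \<and> measure M (D r - L) \<le> C * r ^ n * measure M (D r)"
  shows "((\<lambda>r. measure M (L \<inter> D r) / measure M (D r)) \<longlongrightarrow> 1) (at_right 0)"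
proof (rule tendsto_sandwich)
  have ratio: "measure M (L \<inter> D r) / measure M (D r) = 1 - measure M (D r - L) / measure M (D r)"
    if "0 < measure M (D r)" for r
  proof -
    have "L \<inter> D r = D r - (D r - L)" by blast
    then have "measure M (L \<inter> D r) = measure M (D r) - measure M (D r - L)"
      using assms(1,2) by (simp add: measurable_measure_Diff fmeasurableD)
    with that show ?thesis by (simp add: field_simps)
  qed
  show "\<forall>\<^sub>F r in at_right 0. 1 - C * r ^ n \<le> measure M (L \<inter> D r) / measure M (D r)"
    using assms(4) by eventually_elim (simp add: ratio pos_divide_le_eq)
  show "\<forall>\<^sub>F r in at_right 0. measure M (L \<inter> D r) / measure M (D r) \<le> 1"
    using assms(4) by eventually_elim (simp add: ratio)
  have "((\<lambda>r::real. 1 - C * r ^ n) \<longlongrightarrow> 1 - C * 0 ^ n) (at_right 0)"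
    by (intro tendsto_intros)
  moreover have "(0::real) ^ n = 0"
    using \<open>n > 0\<close> by simp
  ultimately show "((\<lambda>r::real. 1 - C * r ^ n) \<longlongrightarrow> 1) (at_right 0)"
    by simp
qed simp

lemma emeasure_UN_le_infsum:
  assumes "countable I" and sets: "\<And>i. i \<in> I \<Longrightarrow> B i \<in> sets M"
    and le: "\<And>i. i \<in> I \<Longrightarrow> emeasure M (B i) \<le> ennreal (w i)"
    and "w summable_on I" and nonneg: "\<And>i. i \<in> I \<Longrightarrow> 0 \<le> w i"
  shows "emeasure M (\<Union>i\<in>I. B i) \<le> ennreal (\<Sum>\<^sub>\<infinity>i\<in>I. w i)"
proof -
  have ind_le: "indicator (\<Union>i\<in>I. B i) x \<le> (\<integral>\<^sup>+i. indicator (B i) x \<partial>count_space I)" for x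
  proof (cases "x \<in> (\<Union>i\<in>I. B i)")
    case True
    then obtain j where "j \<in> I" "x \<in> B j" by blast
    then have "(\<integral>\<^sup>+i. indicator {j} i \<partial>count_space I) \<le> (\<integral>\<^sup>+i. indicator (B i) x \<partial>count_space I)"
      by (intro nn_integral_mono) (auto split: split_indicator)
    with \<open>j \<in> I\<close> True show ?thesis by simp
  qed simp
  have "emeasure M (\<Union>i\<in>I. B i) = (\<integral>\<^sup>+x. indicator (\<Union>i\<in>I. B i) x \<partial>M)"
    using assms(1) sets by (intro nn_integral_indicator[symmetric] sets.countable_UN') auto
  also have "\<dots> \<le> (\<integral>\<^sup>+x. \<integral>\<^sup>+i. indicator (B i) x \<partial>count_space I \<partial>M)"
    by (intro nn_integral_mono ind_le)
  also have "\<dots> = (\<integral>\<^sup>+i. emeasure M (B i) \<partial>count_space I)"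
    using assms(1) sets
    by (subst nn_integral_count_space_nn_integral) (auto intro!: nn_integral_cong)
  also have "\<dots> \<le> (\<integral>\<^sup>+i. ennreal (w i) \<partial>count_space I)"
    using le by (intro nn_integral_mono) auto
  also have "\<dots> = ennreal (\<Sum>\<^sub>\<infinity>i\<in>I. w i)"
  proof -
    have "Infinite_Sum.abs_summable_on w I"
      using assms(4) summable_on_iff_abs_summable_on_real by blast
    then have "Infinite_Set_Sum.abs_summable_on w I"
      using abs_summable_equivalent by blast
    with nonneg show ?thesis
      by (simp add: nn_integral_conv_infsetsum infsetsum_infsum)
  qed
  finally show ?thesis .
qed

lemma measure_le_infsum_cover:
  assumes "countable I" "S \<in> sets M" "S \<subseteq> (\<Union>i\<in>I. B i)"
    and "\<And>i. i \<in> I \<Longrightarrow> B i \<in> sets M"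
    and "\<And>i. i \<in> I \<Longrightarrow> emeasure M (B i) \<le> ennreal (w i)"
    and "w summable_on I" and "\<And>i. i \<in> I \<Longrightarrow> 0 \<le> w i"
  shows "measure M S \<le> (\<Sum>\<^sub>\<infinity>i\<in>I. w i)"
proof -
  have "emeasure M S \<le> emeasure M (\<Union>i\<in>I. B i)"
    using assms(1-4) by (intro emeasure_mono sets.countable_UN') auto
  also have "\<dots> \<le> ennreal (\<Sum>\<^sub>\<infinity>i\<in>I. w i)"
    using assms(1,4-7) by (rule emeasure_UN_le_infsum)
  finally show ?thesis
    unfolding measure_def using assms(7) by (intro enn2real_leI infsum_nonneg) auto
qed

lemma norm_cis_minus_1: "cmod (cis t - 1) = 2 * \<bar>sin (t / 2)\<bar>"
  using dist_exp_i_1[of t] by (simp add: cis_conv_exp)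

lemma norm_cis_minus_1_le: "cmod (cis t - 1) \<le> \<bar>t\<bar>"
  using abs_sin_x_le_abs_x[of "t / 2"] by (simp add: norm_cis_minus_1)

lemma half_le_sin:
  fixes y :: real
  assumes "0 \<le> y" "y \<le> 1"
  shows "y / 2 \<le> sin y"
proof (cases "y = 0")
  case False
  then obtain \<xi> where \<xi>: "0 < \<xi>" "\<xi> < y" "sin y - sin 0 = (y - 0) * cos \<xi>"
    using MVT2[of 0 y sin cos] assms by (auto intro: DERIV_sin)
  have "cos (pi / 3) \<le> cos \<xi>"
    using \<xi> assms pi_gt3 by (intro cos_monotone_0_pi_le) auto
  then have "1 / 2 \<le> cos \<xi>" by (simp add: cos_60)
  with \<xi> assms show ?thesis by (simp add: mult_left_mono[of "1/2" "cos \<xi>" y, simplified])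
qed simp

lemma abs_diff_le_chord:
  assumes "\<bar>a - b\<bar> \<le> 2"
  shows "\<bar>a - b\<bar> \<le> 2 * cmod (cis a - cis b)"
proof -
  have "cis a - cis b = cis b * (cis (a - b) - 1)"
    by (simp add: algebra_simps cis_mult)
  then have "cmod (cis a - cis b) = 2 * \<bar>sin ((a - b) / 2)\<bar>"
    by (simp add: norm_mult norm_cis_minus_1)
  moreover have "\<bar>a - b\<bar> / 4 \<le> \<bar>sin ((a - b) / 2)\<bar>"
  proof -
    have "sin ((a - b) / 2) = - sin ((b - a) / 2)"
      by (metis minus_diff_eq minus_divide_left sin_minus)
    then show ?thesis
      using half_le_sin[of "(a - b) / 2"] half_le_sin[of "(b - a) / 2"] assms
      by (cases "b \<le> a") auto
  qed
  ultimately show ?thesis by simp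
qed

lemma arc_near_point_sets: "{\<theta> \<in> {-1..1}. cmod (cis \<theta> - z) < \<rho>} \<in> sets lebesgue"
proof -
  have "open {\<theta>. cmod (cis \<theta> - z) < \<rho>}"
    by (intro open_Collect_less continuous_intros)
  then have "{-1..1} \<inter> {\<theta>. cmod (cis \<theta> - z) < \<rho>} \<in> sets lebesgue"
    by (intro sets.Int) (simp_all add: borel_open borel_closed)
  moreover have "{\<theta> \<in> {-1..1}. cmod (cis \<theta> - z) < \<rho>} = {-1..1} \<inter> {\<theta>. cmod (cis \<theta> - z) < \<rho>}"
    by blast
  ultimately show ?thesis by (simp only:)
qed

lemma emeasure_arc_near_point_le:
  "emeasure lebesgue {\<theta> \<in> {-1..1}. cmod (cis \<theta> - z) < \<rho>} \<le> ennreal (8 * \<rho>)"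
proof (cases "{\<theta> \<in> {-1..1}. cmod (cis \<theta> - z) < \<rho>} = {}")
  case False
  then obtain \<theta>\<^sub>0 where \<theta>\<^sub>0: "\<theta>\<^sub>0 \<in> {-1..1}" "cmod (cis \<theta>\<^sub>0 - z) < \<rho>" by blast
  have "{\<theta> \<in> {-1..1}. cmod (cis \<theta> - z) < \<rho>} \<subseteq> {\<theta>\<^sub>0 - 4 * \<rho> .. \<theta>\<^sub>0 + 4 * \<rho>}"
  proof
    fix \<theta> assume \<theta>: "\<theta> \<in> {\<theta> \<in> {-1..1}. cmod (cis \<theta> - z) < \<rho>}"
    have "cmod (cis \<theta> - cis \<theta>\<^sub>0) \<le> cmod (cis \<theta> - z) + cmod (cis \<theta>\<^sub>0 - z)"
      using norm_triangle_ineq4[of "cis \<theta> - z" "cis \<theta>\<^sub>0 - z"] by simp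
    then have "cmod (cis \<theta> - cis \<theta>\<^sub>0) < 2 * \<rho>" using \<theta> \<theta>\<^sub>0 by simp
    moreover have "\<bar>\<theta> - \<theta>\<^sub>0\<bar> \<le> 2 * cmod (cis \<theta> - cis \<theta>\<^sub>0)"
      using \<theta> \<theta>\<^sub>0 by (intro abs_diff_le_chord) auto
    ultimately show "\<theta> \<in> {\<theta>\<^sub>0 - 4 * \<rho> .. \<theta>\<^sub>0 + 4 * \<rho>}" by auto
  qed
  then have "emeasure lebesgue {\<theta> \<in> {-1..1}. cmod (cis \<theta> - z) < \<rho>}
      \<le> emeasure lebesgue {\<theta>\<^sub>0 - 4 * \<rho> .. \<theta>\<^sub>0 + 4 * \<rho>}"
    using fmeasurableD[OF lmeasurable_interval(1)] by (intro emeasure_mono) auto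
  also have "\<dots> = ennreal (8 * \<rho>)"
    using le_less_trans[OF norm_ge_zero \<theta>\<^sub>0(2)] by simp
  finally show ?thesis .
next
  case True
  then show ?thesis by (simp only:) simp
qed

lemma summable_on_int_powr:
  fixes p :: real
  assumes "p > 1"
  shows "(\<lambda>j::int. (1 + \<bar>real_of_int j\<bar>) powr (-p)) summable_on UNIV"
proof -
  let ?g = "\<lambda>j::int. (1 + \<bar>real_of_int j\<bar>) powr (-p)"
  have "summable (\<lambda>n. real (Suc n) powr (-p))"
    using assms summable_Suc_iff[of "\<lambda>n. real n powr (-p)"] by (simp add: summable_real_powr_iff)
  then have nat_summable: "(\<lambda>n. real (Suc n) powr (-p)) summable_on UNIV"
    by (simp add: summable_on_UNIV_nonneg_real_iff)
  have "?g summable_on range f"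
    if "inj f" and "\<And>n. \<bar>real_of_int (f n)\<bar> = real n" for f :: "nat \<Rightarrow> int"
    using nat_summable that by (subst summable_on_reindex) (simp_all add: o_def add.commute)
  then have "?g summable_on (range int \<union> range (\<lambda>n. - int n))"
    by (intro summable_on_union) (auto simp: inj_def)
  also have "range int \<union> range (\<lambda>n. - int n) = UNIV"
  proof -
    have "j \<in> range int \<union> range (\<lambda>n. - int n)" for j :: int
      by (cases j rule: int_cases2) auto
    then show ?thesis by blast
  qed
  finally show ?thesis .
qed

lemma summable_on_prod_vec_nth:
  fixes g :: "int \<Rightarrow> real"
  assumes "g summable_on UNIV" and "\<And>j. g j \<ge> 0"
  shows "(\<lambda>k::int ^ 'd. \<Prod>i\<in>UNIV. g (k $ i)) summable_on UNIV"
proof -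
  have "Infinite_Set_Sum.abs_summable_on g UNIV"
    using assms by (simp add: abs_summable_equivalent[symmetric])
  then have "Infinite_Set_Sum.abs_summable_on (\<lambda>h. \<Prod>i\<in>(UNIV::'d set). g (h i)) (PiE UNIV (\<lambda>_. UNIV))"
    by (intro abs_summable_on_prod_PiE) auto
  then have "(\<lambda>h. \<Prod>i\<in>(UNIV::'d set). g (h i)) summable_on UNIV"
    by (simp add: PiE_UNIV abs_summable_equivalent[symmetric] abs_summable_summable)
  moreover have "bij_betw vec_nth (UNIV :: (int ^ 'd) set) UNIV"
    by (rule bij_betwI[of _ _ _ vec_lambda]) (auto simp: vec_lambda_inverse)
  ultimately show ?thesis
    by (subst (asm) summable_on_reindex_bij_betw[symmetric]) auto
qed

lemma abs_le_l1norm: "\<bar>real_of_int (k $ i)\<bar> \<le> l1norm k"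
  unfolding l1norm_def by (rule member_le_sum) auto

lemma l1norm_ge_1:
  fixes k :: "int ^ 'd"
  assumes "k \<noteq> 0"
  shows "1 \<le> l1norm k"
proof -
  obtain i where "k $ i \<noteq> 0"
    using assms by (metis vec_eq_iff zero_index)
  then have "1 \<le> \<bar>real_of_int (k $ i)\<bar>" by linarith
  also have "\<dots> \<le> l1norm k" by (rule abs_le_l1norm)
  finally show ?thesis .
qed

lemma summable_on_l1norm_powr:
  fixes s :: real
  assumes "s > CARD('d)"
  shows "(\<lambda>k::int ^ 'd. l1norm k powr (-s)) summable_on {k. k \<noteq> 0}"
proof -
  define p where "p = s / CARD('d)"
  have "p > 1" "s > 0" using assms by (simp_all add: p_def)
  define g where "g j = (1 + \<bar>real_of_int j\<bar>) powr (-p)" for j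
  have "(\<lambda>k::int ^ 'd. \<Prod>i\<in>UNIV. g (k $ i)) summable_on UNIV"
    unfolding g_def by (intro summable_on_prod_vec_nth summable_on_int_powr \<open>p > 1\<close>) simp
  then have "(\<lambda>k::int ^ 'd. \<Prod>i\<in>UNIV. g (k $ i)) summable_on {k. k \<noteq> 0}"
    by (rule summable_on_subset_banach) simp
  then have "(\<lambda>k::int ^ 'd. 2 powr s * (\<Prod>i\<in>UNIV. g (k $ i))) summable_on {k. k \<noteq> 0}"
    by (rule summable_on_cmult_right)
  then show ?thesis
  proof (rule summable_on_comparison_test)
    fix k :: "int ^ 'd"
    assume "k \<in> {k. k \<noteq> 0}"
    then have L: "l1norm k \<ge> 1" by (simp add: l1norm_ge_1)
    have two: "2 powr s * 2 powr (-s) = (1::real)"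
      by (simp add: powr_add[symmetric])
    have "l1norm k powr (-s) = 2 powr s * (2 * l1norm k) powr (-s)"
      using L by (simp add: powr_mult mult.assoc[symmetric] two)
    also have "\<dots> \<le> 2 powr s * (1 + l1norm k) powr (-s)"
      using L \<open>s > 0\<close> by (intro mult_left_mono powr_mono2') auto
    also have "(1 + l1norm k) powr (-s) = (\<Prod>i\<in>(UNIV::'d set). (1 + l1norm k) powr (-p))"
      using L by (simp add: p_def powr_realpow[symmetric] powr_powr)
    also have "\<dots> \<le> (\<Prod>i\<in>UNIV. g (k $ i))"
      unfolding g_def using \<open>p > 1\<close> abs_le_l1norm[of k]
      by (intro prod_mono conjI powr_mono2') auto
    finally show "l1norm k powr (-s) \<le> 2 powr s * (\<Prod>i\<in>UNIV. g (k $ i))"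
      by simp
  qed simp
qed

definition exp_kdot :: "real ^ 'd \<Rightarrow> int ^ 'd \<Rightarrow> complex" where
  "exp_kdot \<omega> k = exp (2 * pi * \<i> * complex_of_real (kdot k \<omega>))"

lemma nu_lam_exp_kdot:
  "nu_lam l \<omega> \<tau> = (SUP k\<in>{k. k \<noteq> 0}. if exp_kdot \<omega> k = l then \<infinity>
     else ereal (1 / (cmod (exp_kdot \<omega> k - l) * l1norm k powr \<tau>)))"
  by (simp add: nu_lam_def exp_kdot_def Let_def)

lemma mem_Lam_iff:
  fixes \<omega> :: "real ^ 'd"
  assumes "A > 0"
  shows "l \<in> Lam A \<omega> \<tau> N \<longleftrightarrow>
    (\<forall>k. k \<noteq> 0 \<longrightarrow> cmod (l - 1) ^ (N + 1) \<le> A * cmod (exp_kdot \<omega> k - l) * l1norm k powr \<tau>)"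
proof (cases "l = 1")
  case True
  then show ?thesis
    using assms by (cases "nu_lam 1 \<omega> \<tau>") (auto simp: Lam_def)
next
  case False
  define c where "c = cmod (l - 1) ^ (N + 1)"
  have "c > 0" using False by (simp add: c_def)
  have term_le_iff: "(if exp_kdot \<omega> k = l then \<infinity>
                      else ereal (1 / (cmod (exp_kdot \<omega> k - l) * l1norm k powr \<tau>))) \<le> ereal (A / c)
           \<longleftrightarrow> c \<le> A * cmod (exp_kdot \<omega> k - l) * l1norm k powr \<tau>" if "k \<noteq> 0" for k
  proof -
    have "l1norm k powr \<tau> > 0" using l1norm_ge_1[OF that] by simp
    then show ?thesis
      using \<open>c > 0\<close> \<open>A > 0\<close> by (auto simp: field_simps)
  qed
  have "l \<in> Lam A \<omega> \<tau> N \<longleftrightarrow> nu_lam l \<omega> \<tau> \<le> ereal (A / c)"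
    using \<open>c > 0\<close> by (cases "nu_lam l \<omega> \<tau>") (auto simp: Lam_def c_def pos_le_divide_eq)
  also have "\<dots> \<longleftrightarrow> (\<forall>k. k \<noteq> 0 \<longrightarrow> c \<le> A * cmod (exp_kdot \<omega> k - l) * l1norm k powr \<tau>)"
    unfolding nu_lam_exp_kdot SUP_le_iff using term_le_iff by blast
  finally show ?thesis by (simp add: c_def)
qed

lemma closed_Lam:
  fixes \<omega> :: "real ^ 'd"
  assumes "A > 0"
  shows "closed (Lam A \<omega> \<tau> N)"
proof -
  have "Lam A \<omega> \<tau> N = (\<Inter>k\<in>{k. k \<noteq> 0}.
      {l. cmod (l - 1) ^ (N + 1) \<le> A * cmod (exp_kdot \<omega> k - l) * l1norm k powr \<tau>})"
    using mem_Lam_iff[OF assms] by blast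
  then show ?thesis
    by (simp only:) (intro closed_INT ballI closed_Collect_le continuous_intros)
qed

lemma sets_vimage_cis_Lam:
  fixes \<omega> :: "real ^ 'd"
  assumes "A > 0"
  shows "cis -` Lam A \<omega> \<tau> N \<in> sets lebesgue"
proof -
  have "continuous_on UNIV cis"
    by (intro continuous_intros)
  then have "closed (cis -` Lam A \<omega> \<tau> N)"
    using closed_Lam[of A \<omega> \<tau> N] assms continuous_on_closed_vimage[of UNIV cis] by simp
  then show ?thesis by (simp add: borel_closed)
qed

lemma near_exp_kdot_if_notin_Lam:
  fixes \<omega> :: "real ^ 'd"
  assumes "A > 0" "l \<notin> Lam A \<omega> \<tau> N" "cmod (l - 1) \<le> r"
  shows "\<exists>k. k \<noteq> 0 \<and> cmod (exp_kdot \<omega> k - l) < r ^ (N + 1) / (A * l1norm k powr \<tau>)"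
proof -
  obtain k where k: "k \<noteq> 0"
    and lt: "A * cmod (exp_kdot \<omega> k - l) * l1norm k powr \<tau> < cmod (l - 1) ^ (N + 1)"
    using assms(1,2) mem_Lam_iff by (metis not_le)
  have "cmod (l - 1) ^ (N + 1) \<le> r ^ (N + 1)"
    using assms(3) by (intro power_mono) auto
  moreover have "l1norm k powr \<tau> > 0" using l1norm_ge_1[OF k] by simp
  ultimately show ?thesis
    using k lt \<open>A > 0\<close> by (auto simp: field_simps)
qed

lemma measure_ball_diff_Lam_le:
  fixes \<omega> :: "real ^ 'd" and \<tau> :: real
  assumes "A > 0" "2 * \<tau> > CARD('d)" "r \<ge> 0"
  defines "S \<equiv> \<Sum>\<^sub>\<infinity>k\<in>{k :: int ^ 'd. k \<noteq> 0}. l1norm k powr (- (2 * \<tau>))"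
  shows "measure lebesgue (ball 1 r - Lam A \<omega> \<tau> N) \<le> S / A\<^sup>2 * r ^ (2 * N) * (pi * r\<^sup>2)"
proof -
  define \<rho> where "\<rho> k = r ^ (N + 1) / (A * l1norm k powr \<tau>)" for k :: "int ^ 'd"
  define c where "c = pi * r ^ (2 * N + 2) / A\<^sup>2"
  have cover: "ball 1 r - Lam A \<omega> \<tau> N \<subseteq> (\<Union>k\<in>{k. k \<noteq> 0}. ball (exp_kdot \<omega> k) (\<rho> k))"
  proof
    fix l assume "l \<in> ball 1 r - Lam A \<omega> \<tau> N"
    then have "l \<notin> Lam A \<omega> \<tau> N" "cmod (l - 1) \<le> r"
      by (auto simp: dist_norm norm_minus_commute)
    then obtain k where "k \<noteq> 0" "cmod (exp_kdot \<omega> k - l) < \<rho> k"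
      using near_exp_kdot_if_notin_Lam[OF \<open>A > 0\<close>] unfolding \<rho>_def by blast
    then show "l \<in> (\<Union>k\<in>{k. k \<noteq> 0}. ball (exp_kdot \<omega> k) (\<rho> k))"
      by (auto simp: dist_norm)
  qed
  have area: "emeasure lebesgue (ball (exp_kdot \<omega> k) (\<rho> k)) \<le> ennreal (c * l1norm k powr (- (2 * \<tau>)))"
    if "k \<in> {k. k \<noteq> 0}" for k
  proof -
    have "l1norm k powr \<tau> > 0" using l1norm_ge_1[of k] that by simp
    then have "pi * (\<rho> k)\<^sup>2 = c * l1norm k powr (- (2 * \<tau>))"
      by (simp add: \<rho>_def c_def powr_minus powr_add[symmetric] power_add field_simps power2_eq_square power_mult)
    moreover have "\<rho> k \<ge> 0"
      using \<open>l1norm k powr \<tau> > 0\<close> assms(1,3) by (simp add: \<rho>_def)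
    ultimately show ?thesis
      using emeasure_eq_measure2[of "ball (exp_kdot \<omega> k) (\<rho> k)" lebesgue]
      by (simp add: content_ball unit_ball_vol_2)
  qed
  have "ball 1 r - Lam A \<omega> \<tau> N \<in> sets lebesgue"
    using closed_Lam[of A \<omega> \<tau> N] \<open>A > 0\<close> by (intro sets.Diff) (simp_all add: borel_open borel_closed)
  moreover have "ball (exp_kdot \<omega> k) (\<rho> k) \<in> sets lebesgue" for k
    by (simp add: borel_open)
  moreover have "(\<lambda>k. c * l1norm k powr (- (2 * \<tau>))) summable_on {k :: int ^ 'd. k \<noteq> 0}"
    using assms(2) by (intro summable_on_cmult_right summable_on_l1norm_powr) simp
  moreover have "0 \<le> c * l1norm k powr (- (2 * \<tau>))" for k :: "int ^ 'd"
    using \<open>r \<ge> 0\<close> by (simp add: c_def)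
  ultimately have "measure lebesgue (ball 1 r - Lam A \<omega> \<tau> N)
      \<le> (\<Sum>\<^sub>\<infinity>k\<in>{k :: int ^ 'd. k \<noteq> 0}. c * l1norm k powr (- (2 * \<tau>)))"
    using measure_le_infsum_cover[OF countableI_type _ cover _ area] by blast
  also have "\<dots> = S / A\<^sup>2 * r ^ (2 * N) * (pi * r\<^sup>2)"
    unfolding infsum_cmult_right' S_def c_def by (simp add: power_add power2_eq_square field_simps)
  finally show ?thesis .
qed

lemma measure_arc_diff_Lam_le:
  fixes \<omega> :: "real ^ 'd" and \<tau> :: real
  assumes "A > 0" "\<tau> > CARD('d)" "0 \<le> r" "r \<le> 1"
  defines "S \<equiv> \<Sum>\<^sub>\<infinity>k\<in>{k :: int ^ 'd. k \<noteq> 0}. l1norm k powr (- \<tau>)"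
  shows "measure lebesgue ({-r..r} - cis -` Lam A \<omega> \<tau> N) \<le> 4 * S / A * r ^ N * (2 * r)"
proof -
  define \<rho> where "\<rho> k = r ^ (N + 1) / (A * l1norm k powr \<tau>)" for k :: "int ^ 'd"
  define c where "c = 8 * r ^ (N + 1) / A"
  define J where "J k = {\<theta> \<in> {-1..1}. cmod (cis \<theta> - exp_kdot \<omega> k) < \<rho> k}" for k :: "int ^ 'd"
  have cover: "{-r..r} - cis -` Lam A \<omega> \<tau> N \<subseteq> (\<Union>k\<in>{k. k \<noteq> 0}. J k)"
  proof
    fix \<theta> assume \<theta>: "\<theta> \<in> {-r..r} - cis -` Lam A \<omega> \<tau> N"
    then have "cis \<theta> \<notin> Lam A \<omega> \<tau> N" "cmod (cis \<theta> - 1) \<le> r"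
      using norm_cis_minus_1_le[of \<theta>] by auto
    then obtain k where "k \<noteq> 0" "cmod (exp_kdot \<omega> k - cis \<theta>) < \<rho> k"
      using near_exp_kdot_if_notin_Lam[OF \<open>A > 0\<close>] unfolding \<rho>_def by blast
    moreover have "\<theta> \<in> {-1..1}" using \<theta> \<open>r \<le> 1\<close> by auto
    ultimately show "\<theta> \<in> (\<Union>k\<in>{k. k \<noteq> 0}. J k)"
      unfolding J_def by (auto simp: norm_minus_commute)
  qed
  have arc_length: "emeasure lebesgue (J k) \<le> ennreal (c * l1norm k powr (- \<tau>))"
    if "k \<in> {k. k \<noteq> 0}" for k
  proof -
    have "l1norm k powr \<tau> > 0" using l1norm_ge_1[of k] that by simp
    then have "8 * \<rho> k = c * l1norm k powr (- \<tau>)"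
      by (simp add: \<rho>_def c_def powr_minus field_simps)
    then show ?thesis
      using emeasure_arc_near_point_le[of "exp_kdot \<omega> k" "\<rho> k"] by (simp only: J_def)
  qed
  have "{-r..r} - cis -` Lam A \<omega> \<tau> N \<in> sets lebesgue"
    using sets_vimage_cis_Lam[OF \<open>A > 0\<close>] by (intro sets.Diff) (simp_all add: borel_closed)
  moreover have "J k \<in> sets lebesgue" for k
    unfolding J_def by (rule arc_near_point_sets)
  moreover have "(\<lambda>k. c * l1norm k powr (- \<tau>)) summable_on {k :: int ^ 'd. k \<noteq> 0}"
    using assms(2) by (intro summable_on_cmult_right summable_on_l1norm_powr) simp
  moreover have "0 \<le> c * l1norm k powr (- \<tau>)" for k :: "int ^ 'd"
    using \<open>r \<ge> 0\<close> \<open>A > 0\<close> by (simp add: c_def)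
  ultimately have "measure lebesgue ({-r..r} - cis -` Lam A \<omega> \<tau> N)
      \<le> (\<Sum>\<^sub>\<infinity>k\<in>{k :: int ^ 'd. k \<noteq> 0}. c * l1norm k powr (- \<tau>))"
    using measure_le_infsum_cover[OF countableI_type _ cover _ arc_length] by blast
  also have "\<dots> = 4 * S / A * r ^ N * (2 * r)"
    unfolding infsum_cmult_right' S_def c_def by (simp add: field_simps)
  finally show ?thesis .
qed

lemma density_Lam_disk:
  fixes \<omega> :: "real ^ 'd" and \<tau> :: real
  assumes "A > 0" "N \<ge> 1" "2 * \<tau> > CARD('d)"
  shows "((\<lambda>r. measure lebesgue (Lam A \<omega> \<tau> N \<inter> ball 1 r) / measure lebesgue (ball (1::complex) r))
           \<longlongrightarrow> 1) (at_right 0)"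
proof -
  define S where "S = (\<Sum>\<^sub>\<infinity>k\<in>{k :: int ^ 'd. k \<noteq> 0}. l1norm k powr (- (2 * \<tau>)))"
  have "measure lebesgue (ball (1::complex) r) = pi * r\<^sup>2" if "r \<ge> 0" for r
    using that by (simp add: content_ball unit_ball_vol_2)
  then have defect: "\<forall>\<^sub>F r in at_right 0. 0 < measure lebesgue (ball (1::complex) r)
      \<and> measure lebesgue (ball 1 r - Lam A \<omega> \<tau> N)
        \<le> S / A\<^sup>2 * r ^ (2 * N) * measure lebesgue (ball (1::complex) r)"
    using measure_ball_diff_Lam_le[OF \<open>A > 0\<close> \<open>2 * \<tau> > CARD('d)\<close>]
    unfolding S_def by (intro eventually_at_rightI[of 0 1]) auto
  have "Lam A \<omega> \<tau> N \<in> sets lebesgue"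
    using closed_Lam[of A \<omega> \<tau> N] \<open>A > 0\<close> by (simp add: borel_closed)
  moreover have "0 < 2 * N" using \<open>N \<ge> 1\<close> by simp
  ultimately show ?thesis
    using tendsto_measure_ratio_1[OF _ _ _ defect] by simp
qed

lemma density_Lam_circle:
  fixes \<omega> :: "real ^ 'd" and \<tau> :: real
  assumes "A > 0" "N \<ge> 1" "\<tau> > CARD('d)"
  shows "((\<lambda>r. measure lebesgue {\<theta> \<in> {-r..r}. cis \<theta> \<in> Lam A \<omega> \<tau> N} / (2 * r)) \<longlongrightarrow> 1) (at_right 0)"
proof -
  define S where "S = (\<Sum>\<^sub>\<infinity>k\<in>{k :: int ^ 'd. k \<noteq> 0}. l1norm k powr (- \<tau>))"
  have defect: "\<forall>\<^sub>F r in at_right 0. 0 < measure lebesgue {-r..r}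
      \<and> measure lebesgue ({-r..r} - cis -` Lam A \<omega> \<tau> N) \<le> 4 * S / A * r ^ N * measure lebesgue {-r..r}"
    using measure_arc_diff_Lam_le[OF \<open>A > 0\<close> \<open>\<tau> > CARD('d)\<close>]
    unfolding S_def by (intro eventually_at_rightI[of 0 1]) auto
  have "0 < N" using \<open>N \<ge> 1\<close> by simp
  then have "((\<lambda>r. measure lebesgue (cis -` Lam A \<omega> \<tau> N \<inter> {-r..r}) / measure lebesgue {-r..r})
      \<longlongrightarrow> 1) (at_right 0)"
    using tendsto_measure_ratio_1[OF sets_vimage_cis_Lam[OF \<open>A > 0\<close>] _ _ defect] by simp
  moreover have "measure lebesgue (cis -` Lam A \<omega> \<tau> N \<inter> {-r..r}) / measure lebesgue {-r..r}
      = measure lebesgue {\<theta> \<in> {-r..r}. cis \<theta> \<in> Lam A \<omega> \<tau> N} / (2 * r)" if "r > 0" for r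
  proof -
    have "cis -` Lam A \<omega> \<tau> N \<inter> {-r..r} = {\<theta> \<in> {-r..r}. cis \<theta> \<in> Lam A \<omega> \<tau> N}" by blast
    then show ?thesis using that by simp
  qed
  then have "\<forall>\<^sub>F r in at_right 0.
      measure lebesgue (cis -` Lam A \<omega> \<tau> N \<inter> {-r..r}) / measure lebesgue {-r..r}
      = measure lebesgue {\<theta> \<in> {-r..r}. cis \<theta> \<in> Lam A \<omega> \<tau> N} / (2 * r)"
    by (intro eventually_at_rightI[of 0 1]) auto
  ultimately show ?thesis by (rule Lim_transform_eventually)
qed

theorem mainTheorem5:
  fixes \<omega> :: "real ^ 'd" and \<tau> A :: real and N :: nat
  assumes "nu \<omega> \<tau> < \<infinity>" and "A > 0" and "N \<ge> 1"
  shows "(2 * \<tau> > real CARD('d) \<longrightarrow>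
           ((\<lambda>r. measure lebesgue (Lam A \<omega> \<tau> N \<inter> ball 1 r) / measure lebesgue (ball (1::complex) r))
              \<longlongrightarrow> 1) (at_right 0))
       \<and> (\<tau> > real CARD('d) \<longrightarrow>
           ((\<lambda>r. measure lebesgue {\<theta> \<in> {-r..r}. cis \<theta> \<in> Lam A \<omega> \<tau> N} / (2 * r))
              \<longlongrightarrow> 1) (at_right 0))"
  using density_Lam_disk[OF assms(2,3)] density_Lam_circle[OF assms(2,3)] by blast

end
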